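(* Let $t>0$. For all $n_1,\dots,n_k\ge0$, as polynomials in $x$, $$\prod_{j=1}^kU_{n_j}(x,t)=\sum_{\substack{\pi\in NC_{1,2}(n_1,\dots,n_k)\\ si(\pi)=0}}t^{s_2(\pi)}\,U_{s(\pi)}(x,t),$$ and consequently, with $n=\sum n_j$, $$\prod_{j=1}^kU_{n_j}(x,t)=\sum_{m=0}^nt^{(n-m)/2}\,|NC_2(n_1,\dots,n_k,m)|\,U_m(x,t).$$
   Context: The polynomials $U_m(x,t)$ (scaled Chebyshev polynomials of the second kind) are defined by $U_0=1$, $U_{-1}=0$, $xU_m(x,t)=U_{m+1}(x,t)+tU_{m-1}(x,t)$. For $n_1,\dots,n_r\ge0$ with sum $N$, $\mathcal P(n_1,\dots,n_r)$ is the set of partitions of $\{1,\dots,N\}$ no class of which contains two elements of the same consecutive interval when $\{1,\dots,N\}$ is split into consecutive intervals of lengths $n_1,\dots,n_r$. A partition is noncrossing if there are no $i<j<k<l$ with $i\sim k$, $j\sim l$, $i\not\sim j$. $NC_{1,2}(n_1,\dots,n_r)$ (resp. $NC_2(n_1,\dots,n_r)$) is the set of noncrossing $\pi\in\mathcal P(n_1,\dots,n_r)$ all of whose classes have one or two (resp. exactly two) elements. $s(\pi)$ is the number of one-element classes, $s_2(\pi)$ the number of two-element classes. A class $B$ of $\pi$ is inner if there is another class $C$ and $a,b\in C$ with $a<\min B$ and $\max B<b$, outer otherwise; $si(\pi)$ is the number of inner one-element classes. *)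

theory Defs
  imports "HOL-Computational_Algebra.Polynomial" "HOL-Library.Disjoint_Sets"
begin

fun chebU :: "nat \<Rightarrow> real \<Rightarrow> real poly" where
  "chebU 0 t = 1"
| "chebU (Suc 0) t = [:0, 1:]"
| "chebU (Suc (Suc m)) t = [:0, 1:] * chebU (Suc m) t - smult t (chebU m t)"

definition same_interval :: "nat list \<Rightarrow> nat \<Rightarrow> nat \<Rightarrow> bool" where
  "same_interval ns a b \<longleftrightarrow>
     (\<exists>j<length ns. sum_list (take j ns) < a \<and> a \<le> sum_list (take (Suc j) ns)
                  \<and> sum_list (take j ns) < b \<and> b \<le> sum_list (take (Suc j) ns))"

definition Parts :: "nat list \<Rightarrow> nat set set set" where
  "Parts ns = {p. partition_on {1..sum_list ns} p \<and>
     (\<forall>B\<in>p. \<forall>a\<in>B. \<forall>b\<in>B. a \<noteq> b \<longrightarrow> \<not> same_interval ns a b)}"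

definition equiv_in :: "nat set set \<Rightarrow> nat \<Rightarrow> nat \<Rightarrow> bool" where
  "equiv_in p a b \<longleftrightarrow> (\<exists>B\<in>p. a \<in> B \<and> b \<in> B)"

definition noncrossing :: "nat set set \<Rightarrow> bool" where
  "noncrossing p \<longleftrightarrow> \<not> (\<exists>i j k l. i < j \<and> j < k \<and> k < l \<and>
      equiv_in p i k \<and> equiv_in p j l \<and> \<not> equiv_in p i j)"

definition NC12 :: "nat list \<Rightarrow> nat set set set" where
  "NC12 ns = {p \<in> Parts ns. noncrossing p \<and> (\<forall>B\<in>p. card B = 1 \<or> card B = 2)}"

definition NC2 :: "nat list \<Rightarrow> nat set set set" where
  "NC2 ns = {p \<in> Parts ns. noncrossing p \<and> (\<forall>B\<in>p. card B = 2)}"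

definition singles :: "nat set set \<Rightarrow> nat" where
  "singles p = card {B \<in> p. card B = 1}"

definition pairs :: "nat set set \<Rightarrow> nat" where
  "pairs p = card {B \<in> p. card B = 2}"

definition inner_block :: "nat set set \<Rightarrow> nat set \<Rightarrow> bool" where
  "inner_block p B \<longleftrightarrow> (\<exists>C\<in>p. C \<noteq> B \<and> (\<exists>a\<in>C. \<exists>b\<in>C. a < Min B \<and> Max B < b))"

definition inner_singles :: "nat set set \<Rightarrow> nat" where
  "inner_singles p = card {B \<in> p. card B = 1 \<and> inner_block p B}"

end

theory Submission
  imports Defs
begin

text \<open>Partitions into singletons and pairs are encoded by involutions.  An involution for
  \<open>n\<^sub>1, \<dots>, n\<^sub>k, n\<close> that is noncrossing and has no inner singleton arises uniquely from
  one for \<open>n\<^sub>1, \<dots>, n\<^sub>k\<close> by joining, for some \<open>j \<le> min(s, n)\<close> where \<open>s\<close> is the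
  number of fixed points, its \<open>j\<close> largest fixed points to the first \<open>j\<close> points of the new
  interval by nested arcs.  This adds \<open>j\<close> pairs and leaves \<open>s + n - 2j\<close> singletons, so
  the linearization \<open>U\<^sub>s U\<^sub>n = \<Sum>\<^bsub>j \<le> min(s, n)\<^esub> t\<^sup>j U\<^bsub>s+n-2j\<^esub>\<close> gives the first
  identity by induction on the list.  For the second, group the sum by the number \<open>m\<close> of
  singletons: then \<open>2 s\<^sub>2(\<pi>) + m = N\<close>, and the case \<open>j = s = m\<close> of the same bijection
  matches the involutions with \<open>m\<close> fixed points with \<open>NC\<^sub>2(n\<^sub>1, \<dots>, n\<^sub>k, m)\<close>.\<close>

section \<open>Linearization of products of Chebyshev polynomials\<close>

lemma smult_sum_right: "smult a (sum f S) = (\<Sum>i\<in>S. smult a (f i))"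
  by (induction S rule: infinite_finite_induct) (auto simp: smult_add_right)

lemma X_mult_chebU: "[:0, 1:] * chebU (Suc n) t = chebU (Suc (Suc n)) t + smult t (chebU n t)"
  by simp

lemma chebU_Suc_mult_Suc:
  "chebU (Suc s) t * chebU (Suc n) t = chebU (s + n + 2) t + smult t (chebU s t * chebU n t)"
proof (induction n rule: less_induct)
  case (less n)
  consider "n = 0" | "n = 1" | m where "n = Suc (Suc m)"
    by (metis One_nat_def not0_implies_Suc)
  then show ?case
  proof cases
    case 1
    then show ?thesis using X_mult_chebU[of s t] by (simp add: mult.commute)
  next
    case 2
    have "chebU (Suc s) t * chebU 2 t
        = [:0, 1:] * ([:0, 1:] * chebU (Suc s) t) - smult t (chebU (Suc s) t)"
      by (simp add: numeral_2_eq_2 algebra_simps)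
    also have "\<dots> = chebU (s + 3) t + smult t ([:0, 1:] * chebU s t)"
      by (simp add: X_mult_chebU numeral_3_eq_3 algebra_simps)
    finally show ?thesis using 2 by (simp add: mult.commute)
  next
    case (3 m)
    have IH1: "chebU (Suc s) t * chebU (Suc (Suc m)) t
        = chebU (s + m + 3) t + smult t (chebU s t * chebU (Suc m) t)"
      using less[of "Suc m"] 3 by (simp add: numeral_3_eq_3)
    have IH0: "chebU (Suc s) t * chebU (Suc m) t = chebU (s + m + 2) t + smult t (chebU s t * chebU m t)"
      using less[of m] 3 by simp
    have regroup: "X * (a + smult t (u * v)) - smult t (b + smult t (u * w))
        = (X * a - smult t b) + smult t (u * (X * v - smult t w))" for X a b u v w :: "real poly"
      by (simp add: algebra_simps smult_add_right smult_diff_right)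
    have "chebU (Suc s) t * chebU (Suc n) t
        = [:0, 1:] * (chebU (Suc s) t * chebU (Suc (Suc m)) t)
          - smult t (chebU (Suc s) t * chebU (Suc m) t)"
      using 3 by (simp add: algebra_simps)
    also have "\<dots> = ([:0, 1:] * chebU (s + m + 3) t - smult t (chebU (s + m + 2) t))
          + smult t (chebU s t * ([:0, 1:] * chebU (Suc m) t - smult t (chebU m t)))"
      unfolding IH1 IH0 by (simp only: regroup)
    also have "\<dots> = chebU (s + n + 2) t + smult t (chebU s t * chebU n t)"
      using 3 by (simp add: numeral_3_eq_3 numeral_2_eq_2)
    finally show ?thesis .
  qed
qed

lemma chebU_mult:
  "chebU s t * chebU n t = (\<Sum>j = 0..min s n. smult (t ^ j) (chebU (s + n - 2 * j) t))"
proof (induction n arbitrary: s)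
  case 0
  then show ?case by simp
next
  case (Suc n)
  show ?case
  proof (cases s)
    case 0
    then show ?thesis by simp
  next
    case (Suc s')
    have "chebU s t * chebU (Suc n) t = chebU (s' + n + 2) t + smult t (chebU s' t * chebU n t)"
      using Suc chebU_Suc_mult_Suc by simp
    also have "\<dots> = chebU (s' + n + 2) t
        + (\<Sum>j = 0..min s' n. smult (t ^ Suc j) (chebU (s' + n - 2 * j) t))"
      using Suc.IH[of s'] by (simp add: smult_sum_right)
    also have "\<dots> = (\<Sum>j = 0..Suc (min s' n). smult (t ^ j) (chebU (s + Suc n - 2 * j) t))"
      by (subst sum.atLeast0_atMost_Suc_shift) (simp add: Suc)
    finally show ?thesis using Suc by simp
  qed
qed

section \<open>Involutions and partitions into singletons and pairs\<close>

definition involution_on :: "'a set \<Rightarrow> ('a \<Rightarrow> 'a) \<Rightarrow> bool" where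
  "involution_on A \<sigma> \<longleftrightarrow>
     (\<forall>x. x \<notin> A \<longrightarrow> \<sigma> x = x) \<and> (\<forall>x\<in>A. \<sigma> x \<in> A) \<and> (\<forall>x. \<sigma> (\<sigma> x) = x)"

lemma involution_onD:
  assumes "involution_on A \<sigma>"
  shows "x \<notin> A \<Longrightarrow> \<sigma> x = x" and "x \<in> A \<Longrightarrow> \<sigma> x \<in> A" and "\<sigma> (\<sigma> x) = x"
  using assms by (auto simp: involution_on_def)

lemma finite_involutions_on:
  assumes "finite A"
  shows "finite {\<sigma>. involution_on A \<sigma>}"
proof -
  have "inj_on (\<lambda>\<sigma>. restrict \<sigma> A) {\<sigma>. involution_on A \<sigma>}"
    by (rule inj_onI) (metis ext involution_onD(1) mem_Collect_eq restrict_apply')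
  moreover have "(\<lambda>\<sigma>. restrict \<sigma> A) ` {\<sigma>. involution_on A \<sigma>} \<subseteq> A \<rightarrow>\<^sub>E A"
    by (auto simp: involution_on_def)
  moreover have "finite (A \<rightarrow>\<^sub>E A)"
    using assms by (simp add: finite_PiE)
  ultimately show ?thesis
    by (meson finite_imageD finite_subset)
qed

lemma card_involution_on:
  fixes \<sigma> :: "'a::linorder \<Rightarrow> 'a"
  assumes inv: "involution_on A \<sigma>" and "finite A"
  shows "2 * card {x \<in> A. x < \<sigma> x} + card {x \<in> A. \<sigma> x = x} = card A"
proof -
  define L where "L = {x \<in> A. x < \<sigma> x}"
  define F where "F = {x \<in> A. \<sigma> x = x}"
  define G where "G = {x \<in> A. \<sigma> x < x}"
  have "\<sigma> ` L = G"
  proof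
    show "\<sigma> ` L \<subseteq> G"
      unfolding L_def G_def using involution_onD[OF inv] by auto
    show "G \<subseteq> \<sigma> ` L"
    proof
      fix x assume "x \<in> G"
      then have "\<sigma> x \<in> L" "x = \<sigma> (\<sigma> x)"
        unfolding L_def G_def using involution_onD[OF inv, of x] by auto
      then show "x \<in> \<sigma> ` L" by blast
    qed
  qed
  moreover have "inj_on \<sigma> L"
    by (rule inj_onI) (metis involution_onD(3)[OF inv])
  ultimately have "card G = card L"
    by (metis card_image)
  have "A = (L \<union> F) \<union> G" "L \<inter> F = {}" "(L \<union> F) \<inter> G = {}"
    unfolding L_def F_def G_def by auto
  moreover have "finite L" "finite F" "finite G"
    unfolding L_def F_def G_def using \<open>finite A\<close> by auto
  ultimately have "card A = card L + card F + card G"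
    by (simp add: card_Un_disjoint)
  then show ?thesis
    using \<open>card G = card L\<close> unfolding L_def F_def by simp
qed

definition blocks_of :: "('a \<Rightarrow> 'a) \<Rightarrow> 'a set \<Rightarrow> 'a set set" where
  "blocks_of \<sigma> A = (\<lambda>x. {x, \<sigma> x}) ` A"

lemma involution_on_doubleton_eq:
  assumes "involution_on A \<sigma>" "z \<in> {x, \<sigma> x}"
  shows "{x, \<sigma> x} = {z, \<sigma> z}"
  using assms involution_onD(3)[OF assms(1)] by auto

lemma partition_on_blocks_of:
  assumes inv: "involution_on A \<sigma>"
  shows "partition_on A (blocks_of \<sigma> A)"
proof (rule partition_onI)
  show "\<Union> (blocks_of \<sigma> A) = A"
    using involution_onD[OF inv] by (auto simp: blocks_of_def)
  show "{} \<notin> blocks_of \<sigma> A"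
    by (auto simp: blocks_of_def)
  fix B C assume "B \<in> blocks_of \<sigma> A" "C \<in> blocks_of \<sigma> A" "B \<noteq> C"
  then show "disjnt B C"
    unfolding blocks_of_def disjnt_def using involution_on_doubleton_eq[OF inv] by blast
qed

lemma card_blocks_of:
  assumes "B \<in> blocks_of \<sigma> A"
  shows "card B = 1 \<or> card B = 2"
proof -
  obtain x where "B = {x, \<sigma> x}"
    using assms by (auto simp: blocks_of_def)
  then show ?thesis
    by (cases "\<sigma> x = x") auto
qed

lemma inj_on_blocks_of: "inj_on (\<lambda>\<sigma>. blocks_of \<sigma> A) {\<sigma>. involution_on A \<sigma>}"
proof (rule inj_onI, rule ext)
  fix \<sigma> \<tau> x
  assume "\<sigma> \<in> {\<sigma>. involution_on A \<sigma>}" "\<tau> \<in> {\<sigma>. involution_on A \<sigma>}"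
    and eq: "blocks_of \<sigma> A = blocks_of \<tau> A"
  then have \<sigma>: "involution_on A \<sigma>" and \<tau>: "involution_on A \<tau>"
    by blast+
  show "\<sigma> x = \<tau> x"
  proof (cases "x \<in> A")
    case True
    then have "{x, \<sigma> x} \<in> blocks_of \<sigma> A"
      unfolding blocks_of_def by blast
    then have "{x, \<sigma> x} \<in> blocks_of \<tau> A"
      by (simp only: eq)
    then obtain y where y: "{x, \<sigma> x} = {y, \<tau> y}"
      unfolding blocks_of_def by blast
    then have "{y, \<tau> y} = {x, \<tau> x}"
      by (intro involution_on_doubleton_eq[OF \<tau>]) blast
    then have "{x, \<sigma> x} = {x, \<tau> x}"
      using y by simp
    then show ?thesis
      by (metis doubleton_eq_iff)
  next
    case False
    then show ?thesis
      using involution_onD(1)[OF \<sigma>] involution_onD(1)[OF \<tau>] by simp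
  qed
qed

definition partner :: "'a set set \<Rightarrow> 'a \<Rightarrow> 'a" where
  "partner p x =
     (if \<exists>y. y \<noteq> x \<and> (\<exists>B\<in>p. x \<in> B \<and> y \<in> B) then SOME y. y \<noteq> x \<and> (\<exists>B\<in>p. x \<in> B \<and> y \<in> B)
      else x)"

lemma partner_outside: "partition_on A p \<Longrightarrow> x \<notin> A \<Longrightarrow> partner p x = x"
  by (auto simp: partner_def dest: partition_onD1)

lemma block_eq_partner:
  assumes p: "partition_on A p" and small: "\<forall>B\<in>p. card B = 1 \<or> card B = 2"
    and B: "B \<in> p" "x \<in> B"
  shows "B = {x, partner p x}"
proof -
  have same_block: "(\<exists>C\<in>p. x \<in> C \<and> y \<in> C) \<longleftrightarrow> y \<in> B" for y
    using disjointD[OF partition_onD2[OF p]] B by blast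
  consider "card B = 1" | "card B = 2"
    using small B by blast
  then show ?thesis
  proof cases
    case 1
    then have "B = {x}"
      using B by (auto simp: card_Suc_eq)
    then show ?thesis
      using same_block by (simp add: partner_def)
  next
    case 2
    then obtain y where "B = {x, y}" "y \<noteq> x"
      using B by (auto simp: card_2_iff)
    moreover from this have "partner p x = y"
      unfolding partner_def same_block by (auto intro: some_equality)
    ultimately show ?thesis by simp
  qed
qed

context
  fixes A :: "'a set" and p :: "'a set set"
  assumes p: "partition_on A p" and small: "\<forall>B\<in>p. card B = 1 \<or> card B = 2"
begin

lemma involution_on_partner: "involution_on A (partner p)"
  unfolding involution_on_def
proof (intro conjI allI ballI impI)
  fix x assume "x \<notin> A"
  then show "partner p x = x"
    by (rule partner_outside[OF p])
next
  fix x assume "x \<in> A"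
  then obtain B where B: "B \<in> p" "x \<in> B"
    using partition_onD1[OF p] by blast
  then show "partner p x \<in> A"
    using block_eq_partner[OF p small B] partition_onD1[OF p] by blast
next
  fix x
  show "partner p (partner p x) = x"
  proof (cases "x \<in> A")
    case True
    then obtain B where B: "B \<in> p" "x \<in> B"
      using partition_onD1[OF p] by blast
    then have "{x, partner p x} = {partner p x, partner p (partner p x)}"
      using block_eq_partner[OF p small B] block_eq_partner[OF p small B(1), of "partner p x"]
      by auto
    then show ?thesis
      by (metis doubleton_eq_iff)
  qed (simp add: partner_outside[OF p])
qed

lemma blocks_of_partner: "blocks_of (partner p) A = p"
proof
  show "blocks_of (partner p) A \<subseteq> p"
    unfolding blocks_of_def using block_eq_partner[OF p small] partition_onD1[OF p] by blast
  show "p \<subseteq> blocks_of (partner p) A"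
  proof
    fix B assume "B \<in> p"
    moreover obtain x where "x \<in> B"
      using partition_onD3[OF p] \<open>B \<in> p\<close> by fastforce
    moreover have "x \<in> A"
      using partition_onD1[OF p] \<open>B \<in> p\<close> \<open>x \<in> B\<close> by blast
    ultimately show "B \<in> blocks_of (partner p) A"
      using block_eq_partner[OF p small] unfolding blocks_of_def by blast
  qed
qed

end

lemma singles_blocks_of: "singles (blocks_of \<sigma> A) = card {x \<in> A. \<sigma> x = x}"
proof -
  have "card {x, \<sigma> x} = 1 \<longleftrightarrow> \<sigma> x = x" for x
    by (cases "\<sigma> x = x") auto
  then have "{B \<in> blocks_of \<sigma> A. card B = 1} = (\<lambda>x. {x}) ` {x \<in> A. \<sigma> x = x}"
    unfolding blocks_of_def by (auto intro: image_eqI)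
  then show ?thesis
    unfolding singles_def by (simp add: card_image)
qed

lemma pairs_blocks_of:
  assumes inv: "involution_on A \<sigma>"
  shows "pairs (blocks_of \<sigma> A) = card {x \<in> A. x < \<sigma> x}"
proof -
  have "{B \<in> blocks_of \<sigma> A. card B = 2} = (\<lambda>x. {x, \<sigma> x}) ` {x \<in> A. x < \<sigma> x}"
  proof
    show "{B \<in> blocks_of \<sigma> A. card B = 2} \<subseteq> (\<lambda>x. {x, \<sigma> x}) ` {x \<in> A. x < \<sigma> x}"
    proof
      fix B assume "B \<in> {B \<in> blocks_of \<sigma> A. card B = 2}"
      then obtain x where x: "x \<in> A" "B = {x, \<sigma> x}" "card {x, \<sigma> x} = 2"
        by (auto simp: blocks_of_def)
      then have "\<sigma> x \<noteq> x" by auto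
      then consider "x < \<sigma> x" | "\<sigma> x < x" by linarith
      then show "B \<in> (\<lambda>x. {x, \<sigma> x}) ` {x \<in> A. x < \<sigma> x}"
      proof cases
        case 2
        then show ?thesis
          using x involution_onD[OF inv, of x] by (intro image_eqI[of _ _ "\<sigma> x"]) auto
      qed (use x in auto)
    qed
  qed (auto simp: blocks_of_def)
  moreover have "inj_on (\<lambda>x. {x, \<sigma> x}) {x \<in> A. x < \<sigma> x}"
    by (rule inj_onI) (metis (no_types, lifting) doubleton_eq_iff mem_Collect_eq order.asym)
  ultimately show ?thesis
    unfolding pairs_def by (simp add: card_image)
qed

section \<open>Noncrossing involutions without inner fixed points\<close>

lemma equiv_in_blocks_of:
  assumes inv: "involution_on A \<sigma>"
  shows "equiv_in (blocks_of \<sigma> A) a b \<longleftrightarrow> a \<in> A \<and> (b = a \<or> b = \<sigma> a)"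
proof
  assume "equiv_in (blocks_of \<sigma> A) a b"
  then obtain x where x: "x \<in> A" "a \<in> {x, \<sigma> x}" "b \<in> {x, \<sigma> x}"
    by (auto simp: equiv_in_def blocks_of_def)
  then have "{x, \<sigma> x} = {a, \<sigma> a}"
    using involution_on_doubleton_eq[OF inv] by blast
  moreover have "a \<in> A"
    using x involution_onD[OF inv] by auto
  ultimately show "a \<in> A \<and> (b = a \<or> b = \<sigma> a)"
    using x by auto
qed (auto simp: equiv_in_def blocks_of_def)

lemma noncrossing_blocks_of_iff:
  assumes inv: "involution_on A \<sigma>"
  shows "noncrossing (blocks_of \<sigma> A) \<longleftrightarrow> (\<forall>i k. \<not> (i < k \<and> k < \<sigma> i \<and> \<sigma> i < \<sigma> k))"
proof
  assume nc: "noncrossing (blocks_of \<sigma> A)"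
  show "\<forall>i k. \<not> (i < k \<and> k < \<sigma> i \<and> \<sigma> i < \<sigma> k)"
  proof (intro allI notI)
    fix i k assume cross: "i < k \<and> k < \<sigma> i \<and> \<sigma> i < \<sigma> k"
    then have "\<sigma> i \<noteq> i" "\<sigma> k \<noteq> k" by auto
    then have "i \<in> A" "k \<in> A"
      using involution_onD(1)[OF inv] by blast+
    then have "equiv_in (blocks_of \<sigma> A) i (\<sigma> i)" "equiv_in (blocks_of \<sigma> A) k (\<sigma> k)"
      "\<not> equiv_in (blocks_of \<sigma> A) i k"
      using cross by (auto simp: equiv_in_blocks_of[OF inv])
    then show False
      using nc cross unfolding noncrossing_def by blast
  qed
next
  assume no_cross: "\<forall>i k. \<not> (i < k \<and> k < \<sigma> i \<and> \<sigma> i < \<sigma> k)"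
  show "noncrossing (blocks_of \<sigma> A)"
    unfolding noncrossing_def
  proof (intro notI, elim exE conjE)
    fix i j k l
    assume "i < j" "j < k" "k < l" "equiv_in (blocks_of \<sigma> A) i k"
      "equiv_in (blocks_of \<sigma> A) j l" "\<not> equiv_in (blocks_of \<sigma> A) i j"
    then have "k = \<sigma> i" "l = \<sigma> j"
      by (auto simp: equiv_in_blocks_of[OF inv])
    then show False
      using no_cross \<open>i < j\<close> \<open>j < k\<close> \<open>k < l\<close> by blast
  qed
qed

lemma inner_singles_blocks_of_eq_0_iff:
  assumes inv: "involution_on {1..M} \<sigma>"
  shows "inner_singles (blocks_of \<sigma> {1..M}) = 0 \<longleftrightarrow> (\<forall>x y. y < x \<and> x < \<sigma> y \<longrightarrow> \<sigma> x \<noteq> x)"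
    (is "_ \<longleftrightarrow> ?no_fix_under_arc")
proof -
  let ?p = "blocks_of \<sigma> {1..M}"
  have "{B \<in> ?p. card B = 1 \<and> inner_block ?p B} = {} \<longleftrightarrow> ?no_fix_under_arc"
  proof
    assume no_inner: "{B \<in> ?p. card B = 1 \<and> inner_block ?p B} = {}"
    show ?no_fix_under_arc
    proof (intro allI impI notI)
      fix x y assume arc: "y < x \<and> x < \<sigma> y" and fixed: "\<sigma> x = x"
      then have y: "y \<in> {1..M}"
        using involution_onD(1)[OF inv, of y] by fastforce
      then have x: "x \<in> {1..M}"
        using arc involution_onD(2)[OF inv y] by auto
      have "{x} \<in> ?p"
        using x fixed by (auto simp: blocks_of_def intro!: image_eqI[of _ _ x])
      moreover have "inner_block ?p {x}"
        unfolding inner_block_def using y arc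
        by (intro bexI[of _ "{y, \<sigma> y}"]) (auto simp: blocks_of_def)
      ultimately show False
        using no_inner by auto
    qed
  next
    assume no_fix: ?no_fix_under_arc
    show "{B \<in> ?p. card B = 1 \<and> inner_block ?p B} = {}"
    proof (rule ccontr)
      assume "{B \<in> ?p. card B = 1 \<and> inner_block ?p B} \<noteq> {}"
      then obtain x where x: "card {x, \<sigma> x} = 1" "inner_block ?p {x, \<sigma> x}"
        by (auto simp: blocks_of_def)
      then have fixed: "\<sigma> x = x"
        by (cases "\<sigma> x = x") auto
      then obtain C a b where C: "C \<in> ?p" "a \<in> C" "b \<in> C" "a < x" "x < b"
        using x unfolding inner_block_def by auto
      then obtain y where "C = {y, \<sigma> y}"
        by (auto simp: blocks_of_def)
      then have "(a = y \<and> b = \<sigma> y) \<or> (a = \<sigma> y \<and> b = \<sigma> (\<sigma> y))"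
        using C involution_onD(3)[OF inv, of y] by auto
      then show False
        using no_fix fixed C by metis
    qed
  qed
  moreover have "finite {B \<in> ?p. card B = 1 \<and> inner_block ?p B}"
    by (auto simp: blocks_of_def)
  ultimately show ?thesis
    unfolding inner_singles_def by simp
qed

lemma same_interval_sym: "same_interval ns a b \<longleftrightarrow> same_interval ns b a"
  unfolding same_interval_def by blast

lemma blocks_of_in_Parts_iff:
  assumes "involution_on {1..sum_list ns} \<sigma>"
  shows "blocks_of \<sigma> {1..sum_list ns} \<in> Parts ns \<longleftrightarrow>
     (\<forall>x\<in>{1..sum_list ns}. \<sigma> x \<noteq> x \<longrightarrow> \<not> same_interval ns x (\<sigma> x))"
  unfolding Parts_def using partition_on_blocks_of[OF assms] same_interval_sym[of ns]
  by (auto simp: blocks_of_def)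

text \<open>A partition with blocks of size one or two is encoded by the involution swapping the two
  elements of each pair.  The last two conditions say that the arcs \<open>{i, \<sigma> i}\<close> do not cross
  and that no fixed point lies under an arc, i.e. \<open>si(\<pi>) = 0\<close>.\<close>
definition nc_involution :: "nat list \<Rightarrow> (nat \<Rightarrow> nat) \<Rightarrow> bool" where
  "nc_involution ns \<sigma> \<longleftrightarrow> involution_on {1..sum_list ns} \<sigma>
     \<and> (\<forall>x\<in>{1..sum_list ns}. \<sigma> x \<noteq> x \<longrightarrow> \<not> same_interval ns x (\<sigma> x))
     \<and> (\<forall>i k. \<not> (i < k \<and> k < \<sigma> i \<and> \<sigma> i < \<sigma> k))
     \<and> (\<forall>x y. y < x \<and> x < \<sigma> y \<longrightarrow> \<sigma> x \<noteq> x)"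

lemma nc_involutionD:
  assumes "nc_involution ns \<sigma>"
  shows "involution_on {1..sum_list ns} \<sigma>"
    and "x \<in> {1..sum_list ns} \<Longrightarrow> \<sigma> x \<noteq> x \<Longrightarrow> \<not> same_interval ns x (\<sigma> x)"
    and "i < k \<Longrightarrow> k < \<sigma> i \<Longrightarrow> \<sigma> i < \<sigma> k \<Longrightarrow> False"
    and "\<sigma> x = x \<Longrightarrow> y < x \<Longrightarrow> x < \<sigma> y \<Longrightarrow> False"
  using assms unfolding nc_involution_def by blast+

lemma finite_nc_involutions: "finite {\<sigma>. nc_involution ns \<sigma>}"
  by (rule finite_subset[OF _ finite_involutions_on[of "{1..sum_list ns}"]])
    (auto simp: nc_involution_def)

lemma inj_on_blocks_of_nc_involutions:
  "inj_on (\<lambda>\<sigma>. blocks_of \<sigma> {1..sum_list ns}) {\<sigma>. nc_involution ns \<sigma>}"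
  by (rule inj_on_subset[OF inj_on_blocks_of]) (auto simp: nc_involution_def)

definition fixpoints :: "nat \<Rightarrow> (nat \<Rightarrow> nat) \<Rightarrow> nat set" where
  "fixpoints N \<sigma> = {x \<in> {1..N}. \<sigma> x = x}"

lemma finite_fixpoints [simp]: "finite (fixpoints N \<sigma>)"
  by (simp add: fixpoints_def)

lemma card_fixpoints_le: "card (fixpoints N \<sigma>) \<le> N"
proof -
  have "card (fixpoints N \<sigma>) \<le> card {1..N}"
    by (rule card_mono) (auto simp: fixpoints_def)
  then show ?thesis by simp
qed

lemma NC12_no_inner_singles_eq:
  "{p \<in> NC12 ns. inner_singles p = 0}
     = (\<lambda>\<sigma>. blocks_of \<sigma> {1..sum_list ns}) ` {\<sigma>. nc_involution ns \<sigma>}"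
proof
  show "{p \<in> NC12 ns. inner_singles p = 0}
      \<subseteq> (\<lambda>\<sigma>. blocks_of \<sigma> {1..sum_list ns}) ` {\<sigma>. nc_involution ns \<sigma>}"
  proof
    fix p assume p: "p \<in> {p \<in> NC12 ns. inner_singles p = 0}"
    then have "partition_on {1..sum_list ns} p" "\<forall>B\<in>p. card B = 1 \<or> card B = 2"
      by (auto simp: NC12_def Parts_def)
    then obtain \<sigma> where \<sigma>: "involution_on {1..sum_list ns} \<sigma>" "p = blocks_of \<sigma> {1..sum_list ns}"
      using involution_on_partner blocks_of_partner by metis
    have "nc_involution ns \<sigma>"
      unfolding nc_involution_def
      using p \<sigma> blocks_of_in_Parts_iff[OF \<sigma>(1)] noncrossing_blocks_of_iff[OF \<sigma>(1)]
        inner_singles_blocks_of_eq_0_iff[OF \<sigma>(1)]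
      by (auto simp: NC12_def)
    then show "p \<in> (\<lambda>\<sigma>. blocks_of \<sigma> {1..sum_list ns}) ` {\<sigma>. nc_involution ns \<sigma>}"
      using \<sigma> by auto
  qed
  show "(\<lambda>\<sigma>. blocks_of \<sigma> {1..sum_list ns}) ` {\<sigma>. nc_involution ns \<sigma>}
      \<subseteq> {p \<in> NC12 ns. inner_singles p = 0}"
  proof
    fix p assume "p \<in> (\<lambda>\<sigma>. blocks_of \<sigma> {1..sum_list ns}) ` {\<sigma>. nc_involution ns \<sigma>}"
    then obtain \<sigma> where \<sigma>: "nc_involution ns \<sigma>" "p = blocks_of \<sigma> {1..sum_list ns}"
      by auto
    note inv = nc_involutionD(1)[OF \<sigma>(1)]
    show "p \<in> {p \<in> NC12 ns. inner_singles p = 0}"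
      using \<sigma> blocks_of_in_Parts_iff[OF inv] noncrossing_blocks_of_iff[OF inv]
        inner_singles_blocks_of_eq_0_iff[OF inv] card_blocks_of[of _ \<sigma>]
      by (auto simp: NC12_def nc_involution_def)
  qed
qed

lemma NC2_eq_NC12: "NC2 ns = {p \<in> NC12 ns. inner_singles p = 0 \<and> singles p = 0}"
proof (intro equalityI subsetI)
  fix p assume p: "p \<in> NC2 ns"
  then have no_singletons:
    "{B \<in> p. card B = 1} = {}" "{B \<in> p. card B = 1 \<and> inner_block p B} = {}"
    by (auto simp: NC2_def)
  have "singles p = 0" "inner_singles p = 0"
    unfolding singles_def inner_singles_def no_singletons by simp_all
  then show "p \<in> {p \<in> NC12 ns. inner_singles p = 0 \<and> singles p = 0}"
    using p by (auto simp: NC2_def NC12_def)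
next
  fix p assume p: "p \<in> {p \<in> NC12 ns. inner_singles p = 0 \<and> singles p = 0}"
  then have "finite p"
    by (auto simp: NC12_def Parts_def intro: finite_elements)
  then have "{B \<in> p. card B = 1} = {}"
    using p by (simp add: singles_def)
  then show "p \<in> NC2 ns"
    using p by (auto simp: NC12_def NC2_def)
qed

lemma NC2_eq:
  "NC2 ns = (\<lambda>\<sigma>. blocks_of \<sigma> {1..sum_list ns})
              ` {\<sigma>. nc_involution ns \<sigma> \<and> fixpoints (sum_list ns) \<sigma> = {}}"
proof -
  have "NC2 ns = {p \<in> {p \<in> NC12 ns. inner_singles p = 0}. singles p = 0}"
    by (auto simp: NC2_eq_NC12)
  also have "\<dots> = {p \<in> (\<lambda>\<sigma>. blocks_of \<sigma> {1..sum_list ns}) ` {\<sigma>. nc_involution ns \<sigma>}. singles p = 0}"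
    by (simp only: NC12_no_inner_singles_eq)
  also have "\<dots> = (\<lambda>\<sigma>. blocks_of \<sigma> {1..sum_list ns})
      ` {\<sigma>. nc_involution ns \<sigma> \<and> fixpoints (sum_list ns) \<sigma> = {}}"
    by (auto simp: singles_blocks_of fixpoints_def)
  finally show ?thesis .
qed

section \<open>Adding an interval\<close>

definition top_rank :: "'a::linorder set \<Rightarrow> 'a \<Rightarrow> nat" where
  "top_rank S x = card {y \<in> S. x < y}"

lemma top_rank_less:
  assumes "finite S" "x \<in> S" "y \<in> S" "x < y"
  shows "top_rank S y < top_rank S x"
  unfolding top_rank_def by (rule psubset_card_mono) (use assms in auto)

lemma inj_on_top_rank: "finite S \<Longrightarrow> inj_on (top_rank S) S"
  by (rule inj_onI) (metis linorder_cases top_rank_less less_irrefl)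

lemma top_rank_less_card: "finite S \<Longrightarrow> x \<in> S \<Longrightarrow> top_rank S x < card S"
  unfolding top_rank_def by (rule psubset_card_mono) auto

lemma top_rank_image: "finite S \<Longrightarrow> top_rank S ` S = {..<card S}"
  by (rule card_subset_eq) (auto simp: card_image inj_on_top_rank top_rank_less_card)

lemma card_top_rank_less:
  assumes "finite S" "j \<le> card S"
  shows "card {x \<in> S. top_rank S x < j} = j"
proof -
  have "top_rank S ` {x \<in> S. top_rank S x < j} = {i \<in> top_rank S ` S. i < j}"
    by auto
  also have "\<dots> = {..<j}"
    using top_rank_image[OF assms(1)] assms(2) by auto
  finally have "top_rank S ` {x \<in> S. top_rank S x < j} = {..<j}" .
  moreover have "inj_on (top_rank S) {x \<in> S. top_rank S x < j}"
    by (rule inj_on_subset[OF inj_on_top_rank[OF assms(1)]]) auto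
  ultimately show ?thesis
    by (metis card_image card_lessThan)
qed

definition top_unrank :: "'a::linorder set \<Rightarrow> nat \<Rightarrow> 'a" where
  "top_unrank S = the_inv_into S (top_rank S)"

lemma top_unrank:
  assumes "finite S" "i < card S"
  shows "top_unrank S i \<in> S" and "top_rank S (top_unrank S i) = i"
proof -
  have "i \<in> top_rank S ` S"
    using top_rank_image[OF assms(1)] assms(2) by simp
  then show "top_unrank S i \<in> S" "top_rank S (top_unrank S i) = i"
    unfolding top_unrank_def
    using the_inv_into_into[OF inj_on_top_rank[OF assms(1)] _ subset_refl]
      f_the_inv_into_f[OF inj_on_top_rank[OF assms(1)]]
    by auto
qed

lemma top_unrank_top_rank: "finite S \<Longrightarrow> x \<in> S \<Longrightarrow> top_unrank S (top_rank S x) = x"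
  unfolding top_unrank_def by (rule the_inv_into_f_f[OF inj_on_top_rank])

lemma same_interval_snoc:
  fixes ns :: "nat list"
  assumes "a \<in> {1..sum_list ns + n}" "b \<in> {1..sum_list ns + n}"
  shows "same_interval (ns @ [n]) a b \<longleftrightarrow>
    (a \<le> sum_list ns \<and> b \<le> sum_list ns \<and> same_interval ns a b)
    \<or> (sum_list ns < a \<and> sum_list ns < b)"
proof
  assume "same_interval (ns @ [n]) a b"
  then obtain i where i: "i < Suc (length ns)"
    "sum_list (take i (ns @ [n])) < a" "a \<le> sum_list (take (Suc i) (ns @ [n]))"
    "sum_list (take i (ns @ [n])) < b" "b \<le> sum_list (take (Suc i) (ns @ [n]))"
    unfolding same_interval_def by auto
  show "(a \<le> sum_list ns \<and> b \<le> sum_list ns \<and> same_interval ns a b)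
    \<or> (sum_list ns < a \<and> sum_list ns < b)"
  proof (cases "i = length ns")
    case False
    then have "i < length ns"
      using i by simp
    moreover have "sum_list (take (Suc i) ns) \<le> sum_list ns"
      by (metis append_take_drop_id le_add1 sum_list_append)
    ultimately show ?thesis
      using i unfolding same_interval_def by auto
  qed (use i in simp)
next
  assume "(a \<le> sum_list ns \<and> b \<le> sum_list ns \<and> same_interval ns a b)
    \<or> (sum_list ns < a \<and> sum_list ns < b)"
  then show "same_interval (ns @ [n]) a b"
  proof
    assume "a \<le> sum_list ns \<and> b \<le> sum_list ns \<and> same_interval ns a b"
    then obtain i where "i < length ns"
      "sum_list (take i ns) < a" "a \<le> sum_list (take (Suc i) ns)"
      "sum_list (take i ns) < b" "b \<le> sum_list (take (Suc i) ns)"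
      unfolding same_interval_def by auto
    then show ?thesis
      unfolding same_interval_def by (intro exI[of _ i]) auto
  next
    assume "sum_list ns < a \<and> sum_list ns < b"
    then show ?thesis
      unfolding same_interval_def using assms by (intro exI[of _ "length ns"]) auto
  qed
qed

definition num_arcs :: "nat \<Rightarrow> (nat \<Rightarrow> nat) \<Rightarrow> nat" where
  "num_arcs N \<sigma> = card {x \<in> {1..N}. x < \<sigma> x}"

lemma double_num_arcs_add_card_fixpoints:
  assumes "nc_involution ns \<sigma>"
  shows "2 * num_arcs (sum_list ns) \<sigma> + card (fixpoints (sum_list ns) \<sigma>) = sum_list ns"
  using card_involution_on[OF nc_involutionD(1)[OF assms]]
  by (simp add: num_arcs_def fixpoints_def)

text \<open>The \<open>j\<close> largest fixed points of \<open>\<sigma>\<close> are joined to the first points \<open>N+1, \<dots>, N+j\<close> of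
  the new interval by nested arcs, the largest fixed point to \<open>N+1\<close>.\<close>
definition extend_inv :: "nat \<Rightarrow> (nat \<Rightarrow> nat) \<Rightarrow> nat \<Rightarrow> nat \<Rightarrow> nat" where
  "extend_inv N \<sigma> j x =
     (if x \<in> fixpoints N \<sigma> \<and> top_rank (fixpoints N \<sigma>) x < j
      then N + 1 + top_rank (fixpoints N \<sigma>) x
      else if N < x \<and> x \<le> N + j then top_unrank (fixpoints N \<sigma>) (x - N - 1)
      else \<sigma> x)"

lemma extend_inv_cases:
  fixes N j x :: nat and \<sigma> :: "nat \<Rightarrow> nat"
  defines "F \<equiv> fixpoints N \<sigma>"
  obtains (top) "x \<in> F" "top_rank F x < j" "extend_inv N \<sigma> j x = N + 1 + top_rank F x"
  | (new) "N < x" "x \<le> N + j" "extend_inv N \<sigma> j x = top_unrank F (x - N - 1)"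
  | (old) "\<not> (x \<in> F \<and> top_rank F x < j)" "\<not> (N < x \<and> x \<le> N + j)"
      "extend_inv N \<sigma> j x = \<sigma> x"
  by (cases "x \<in> F \<and> top_rank F x < j"; cases "N < x \<and> x \<le> N + j")
    (auto simp: extend_inv_def F_def fixpoints_def)

lemma extend_inv_top:
  "x \<in> fixpoints N \<sigma> \<Longrightarrow> top_rank (fixpoints N \<sigma>) x < j
    \<Longrightarrow> extend_inv N \<sigma> j x = N + 1 + top_rank (fixpoints N \<sigma>) x"
  by (simp add: extend_inv_def)

lemma extend_inv_new:
  "N < x \<Longrightarrow> x \<le> N + j \<Longrightarrow> extend_inv N \<sigma> j x = top_unrank (fixpoints N \<sigma>) (x - N - 1)"
  by (simp add: extend_inv_def fixpoints_def)

lemma extend_inv_old: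
  "\<not> (x \<in> fixpoints N \<sigma> \<and> top_rank (fixpoints N \<sigma>) x < j) \<Longrightarrow> \<not> (N < x \<and> x \<le> N + j)
    \<Longrightarrow> extend_inv N \<sigma> j x = \<sigma> x"
  unfolding extend_inv_def by (rule trans[OF if_not_P if_not_P])

definition restrict_inv :: "nat \<Rightarrow> (nat \<Rightarrow> nat) \<Rightarrow> nat \<Rightarrow> nat" where
  "restrict_inv N \<tau> x = (if x \<le> N \<and> \<tau> x \<le> N then \<tau> x else x)"

locale nc_extension =
  fixes ns :: "nat list" and n j :: nat and \<sigma> :: "nat \<Rightarrow> nat"
  assumes nc: "nc_involution ns \<sigma>"
    and j_le_fix: "j \<le> card (fixpoints (sum_list ns) \<sigma>)" and j_le_n: "j \<le> n"
begin

abbreviation "N \<equiv> sum_list ns"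
abbreviation "F \<equiv> fixpoints N \<sigma>"
abbreviation "\<tau> \<equiv> extend_inv N \<sigma> j"

lemma sigma_outside: "x \<notin> {1..N} \<Longrightarrow> \<sigma> x = x"
  and sigma_inside: "x \<in> {1..N} \<Longrightarrow> \<sigma> x \<in> {1..N}"
  and sigma_sigma: "\<sigma> (\<sigma> x) = x"
  using involution_onD[OF nc_involutionD(1)[OF nc]] by auto

lemma mem_F_iff: "x \<in> F \<longleftrightarrow> 1 \<le> x \<and> x \<le> N \<and> \<sigma> x = x"
  by (auto simp: fixpoints_def)

lemma top_unrank_F:
  assumes "N < x" "x \<le> N + j"
  shows "top_unrank F (x - N - 1) \<in> F" "top_rank F (top_unrank F (x - N - 1)) = x - N - 1"
  using top_unrank[of F "x - N - 1"] j_le_fix assms by auto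

lemma extend_inv_extend_inv: "\<tau> (\<tau> x) = x"
proof (cases x rule: extend_inv_cases[where N = N and \<sigma> = \<sigma> and j = j])
  case top
  then have "\<tau> (\<tau> x) = top_unrank F (top_rank F x)"
    using extend_inv_new[of N "N + 1 + top_rank F x" j \<sigma>] by simp
  then show ?thesis
    using top top_unrank_top_rank[OF finite_fixpoints] by simp
next
  case new
  then have "\<tau> (\<tau> x) = N + 1 + (x - N - 1)"
    using top_unrank_F[OF new(1,2)] extend_inv_top by simp
  then show ?thesis
    using new by simp
next
  case old
  have "\<not> (\<sigma> x \<in> F \<and> top_rank F (\<sigma> x) < j)"
  proof
    assume "\<sigma> x \<in> F \<and> top_rank F (\<sigma> x) < j"
    moreover from this have "\<sigma> x = x"
      using sigma_sigma[of x] by (simp add: mem_F_iff)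
    ultimately show False
      using old(1) by simp
  qed
  moreover have "\<not> (N < \<sigma> x \<and> \<sigma> x \<le> N + j)"
  proof
    assume "N < \<sigma> x \<and> \<sigma> x \<le> N + j"
    moreover from this have "\<sigma> x = x"
      using sigma_sigma[of x] sigma_outside[of "\<sigma> x"] by simp
    ultimately show False
      using old(2) by simp
  qed
  ultimately show ?thesis
    using old(3) sigma_sigma extend_inv_old by simp
qed

lemma involution_on_extend_inv: "involution_on {1..N + n} \<tau>"
  unfolding involution_on_def
proof (intro conjI allI ballI impI)
  fix x assume "x \<notin> {1..N + n}"
  then show "\<tau> x = x"
    using j_le_n sigma_outside[of x] by (cases x rule: extend_inv_cases[where N = N and \<sigma> = \<sigma> and j = j])
      (auto simp: mem_F_iff)
next
  fix x assume x: "x \<in> {1..N + n}"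
  then show "\<tau> x \<in> {1..N + n}"
  proof (cases x rule: extend_inv_cases[where N = N and \<sigma> = \<sigma> and j = j])
    case new
    then show ?thesis
      using top_unrank_F[OF new(1,2)] by (auto simp: mem_F_iff)
  next
    case old
    then show ?thesis
      using x sigma_inside[of x] sigma_outside[of x] by (cases "x \<le> N") auto
  qed (use j_le_n in auto)
qed (rule extend_inv_extend_inv)

lemma extend_inv_not_same_interval:
  assumes x: "x \<in> {1..N + n}" and moved: "\<tau> x \<noteq> x"
  shows "\<not> same_interval (ns @ [n]) x (\<tau> x)"
proof -
  have "\<tau> x \<in> {1..N + n}"
    using involution_on_extend_inv x by (simp add: involution_on_def)
  then have same_iff: "same_interval (ns @ [n]) x (\<tau> x) \<longleftrightarrow>
      (x \<le> N \<and> \<tau> x \<le> N \<and> same_interval ns x (\<tau> x)) \<or> (N < x \<and> N < \<tau> x)"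
    using same_interval_snoc x by blast
  show ?thesis
  proof (cases x rule: extend_inv_cases[where N = N and \<sigma> = \<sigma> and j = j])
    case new
    then show ?thesis
      using same_iff top_unrank_F[OF new(1,2)] by (auto simp: mem_F_iff)
  next
    case old
    then have "x \<in> {1..N}"
      using moved sigma_outside by fastforce
    then show ?thesis
      using same_iff old moved sigma_inside nc_involutionD(2)[OF nc] by auto
  qed (use same_iff in \<open>auto simp: mem_F_iff\<close>)
qed

lemma extend_inv_noncrossing:
  assumes cross: "i < k" "k < \<tau> i" "\<tau> i < \<tau> k"
  shows False
proof (cases i rule: extend_inv_cases[where N = N and \<sigma> = \<sigma> and j = j])
  case i: top
  show False
  proof (cases k rule: extend_inv_cases[where N = N and \<sigma> = \<sigma> and j = j])
    case top
    then show False
      using i cross top_rank_less[of F i k] by auto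
  next
    case new
    then show False
      using i cross top_unrank_F[OF new(1,2)] by (auto simp: mem_F_iff)
  next
    case old
    then show False
      using i cross sigma_inside[of k] by (cases "k \<le> N") (auto simp: mem_F_iff)
  qed
next
  case new
  then show False
    using cross top_unrank_F[OF new(1,2)] by (auto simp: mem_F_iff)
next
  case i: old
  show False
  proof (cases k rule: extend_inv_cases[where N = N and \<sigma> = \<sigma> and j = j])
    case top
    then show False
      using i cross nc_involutionD(4)[OF nc, of k i] by (auto simp: mem_F_iff)
  next
    case new
    then have "N < \<sigma> i"
      using i cross by auto
    then have "\<sigma> i = i"
      using sigma_inside[of i] sigma_outside[of i] by (cases "i \<in> {1..N}") auto
    then show False
      using i cross by auto
  next
    case old
    then show False
      using i cross nc_involutionD(3)[OF nc, of i k] by auto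
  qed
qed

lemma extend_inv_no_fix_under_arc:
  assumes fixed: "\<tau> x = x" and arc: "y < x" "x < \<tau> y"
  shows False
proof -
  have x_old: "\<not> (x \<in> F \<and> top_rank F x < j)" "\<not> (N < x \<and> x \<le> N + j)"
    using fixed top_unrank_F[of x]
    by (cases x rule: extend_inv_cases[where N = N and \<sigma> = \<sigma> and j = j]; force simp: mem_F_iff)+
  then have "\<sigma> x = x"
    using fixed extend_inv_old by simp
  show False
  proof (cases y rule: extend_inv_cases[where N = N and \<sigma> = \<sigma> and j = j])
    case top
    show False
    proof (cases "x \<le> N")
      case True
      then have "x \<in> F"
        using \<open>\<sigma> x = x\<close> arc top by (auto simp: mem_F_iff)
      then show False
        using x_old top arc top_rank_less[of F y x] by auto
    next
      case False
      then show False
        using x_old top arc by auto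
    qed
  next
    case new
    then show False
      using arc top_unrank_F[OF new(1,2)] by (auto simp: mem_F_iff)
  next
    case old
    then show False
      using arc \<open>\<sigma> x = x\<close> nc_involutionD(4)[OF nc] by auto
  qed
qed

lemma nc_involution_extend_inv: "nc_involution (ns @ [n]) \<tau>"
  unfolding nc_involution_def sum_list_append
  using involution_on_extend_inv extend_inv_not_same_interval extend_inv_noncrossing
    extend_inv_no_fix_under_arc
  by auto

lemma restrict_inv_extend_inv: "restrict_inv N \<tau> = \<sigma>"
proof
  fix x
  show "restrict_inv N \<tau> x = \<sigma> x"
  proof (cases x rule: extend_inv_cases[where N = N and \<sigma> = \<sigma> and j = j])
    case top
    then show ?thesis
      by (auto simp: restrict_inv_def mem_F_iff)
  next
    case new
    then show ?thesis
      using sigma_outside[of x] by (auto simp: restrict_inv_def)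
  next
    case old
    then show ?thesis
      using sigma_inside[of x] sigma_outside[of x] by (cases "x \<in> {1..N}") (auto simp: restrict_inv_def)
  qed
qed

lemma card_fixpoints_extend_inv: "card (fixpoints (N + n) \<tau>) = card F + n - 2 * j"
proof -
  let ?T = "{x \<in> F. top_rank F x < j}"
  have "fixpoints (N + n) \<tau> = (F - ?T) \<union> {N + j + 1..N + n}"
  proof (intro set_eqI iffI)
    fix x assume x: "x \<in> fixpoints (N + n) \<tau>"
    then have x_range: "x \<in> {1..N + n}" and fixed: "\<tau> x = x"
      by (auto simp: fixpoints_def)
    show "x \<in> (F - ?T) \<union> {N + j + 1..N + n}"
    proof (cases x rule: extend_inv_cases[where N = N and \<sigma> = \<sigma> and j = j])
      case top
      then show ?thesis
        using fixed by (simp add: mem_F_iff)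
    next
      case new
      then show ?thesis
        using fixed top_unrank_F[OF new(1,2)] by (simp add: mem_F_iff)
    next
      case old
      then have "\<sigma> x = x"
        using fixed by simp
      then show ?thesis
        using old x_range by (cases "x \<le> N") (auto simp: mem_F_iff)
    qed
  next
    fix x assume x: "x \<in> (F - ?T) \<union> {N + j + 1..N + n}"
    then have "\<tau> x = \<sigma> x" "\<sigma> x = x"
      using sigma_outside[of x] extend_inv_old[of x N \<sigma> j] by (auto simp: fixpoints_def)
    then show "x \<in> fixpoints (N + n) \<tau>"
      using x by (auto simp: fixpoints_def)
  qed
  moreover have "card (F - ?T) = card F - j"
    using card_Diff_subset[of ?T F] card_top_rank_less[OF finite_fixpoints j_le_fix] by auto
  moreover have "(F - ?T) \<inter> {N + j + 1..N + n} = {}"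
    by (auto simp: fixpoints_def)
  ultimately show ?thesis
    using j_le_fix j_le_n by (simp add: card_Un_disjoint)
qed

lemma num_arcs_extend_inv: "num_arcs (N + n) \<tau> = num_arcs N \<sigma> + j"
proof -
  have "{x \<in> {1..N + n}. x < \<tau> x} = {x \<in> {1..N}. x < \<sigma> x} \<union> {x \<in> F. top_rank F x < j}"
  proof (intro set_eqI iffI)
    fix x assume x: "x \<in> {x \<in> {1..N + n}. x < \<tau> x}"
    then show "x \<in> {x \<in> {1..N}. x < \<sigma> x} \<union> {x \<in> F. top_rank F x < j}"
      using top_unrank_F[of x] sigma_outside[of x]
      by (cases x rule: extend_inv_cases[where N = N and \<sigma> = \<sigma> and j = j])
        (auto simp: mem_F_iff)
  next
    fix x assume "x \<in> {x \<in> {1..N}. x < \<sigma> x} \<union> {x \<in> F. top_rank F x < j}"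
    then show "x \<in> {x \<in> {1..N + n}. x < \<tau> x}"
      by (cases x rule: extend_inv_cases[where N = N and \<sigma> = \<sigma> and j = j])
        (auto simp: mem_F_iff)
  qed
  moreover have "{x \<in> {1..N}. x < \<sigma> x} \<inter> {x \<in> F. top_rank F x < j} = {}"
    by (auto simp: mem_F_iff)
  ultimately show ?thesis
    unfolding num_arcs_def
    using card_top_rank_less[OF finite_fixpoints j_le_fix] by (simp add: card_Un_disjoint)
qed

end

section \<open>Removing the last interval\<close>

lemma down_closed_eq_greaterThanAtMost:
  fixes Y :: "nat set"
  assumes "finite Y" "Y \<subseteq> {a<..}" and closed: "\<And>y y'. y \<in> Y \<Longrightarrow> a < y' \<Longrightarrow> y' < y \<Longrightarrow> y' \<in> Y"
  shows "Y = {a<..a + card Y}"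
proof (cases "Y = {}")
  case False
  define m where "m = Max Y"
  have "m \<in> Y"
    using Max_in[OF assms(1) False] m_def by simp
  have "Y = {a<..m}"
  proof
    show "Y \<subseteq> {a<..m}"
      using assms(1,2) m_def by auto
    show "{a<..m} \<subseteq> Y"
      using \<open>m \<in> Y\<close> closed[of m] by (auto simp: order.order_iff_strict)
  qed
  moreover have "a < m"
    using \<open>m \<in> Y\<close> assms(2) by auto
  ultimately show ?thesis
    by simp
qed simp

definition linked_beyond :: "nat \<Rightarrow> (nat \<Rightarrow> nat) \<Rightarrow> nat set" where
  "linked_beyond N \<tau> = {x \<in> {1..N}. N < \<tau> x}"

locale nc_restriction =
  fixes ns :: "nat list" and n :: nat and \<tau> :: "nat \<Rightarrow> nat"
  assumes nc: "nc_involution (ns @ [n]) \<tau>"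
begin

abbreviation "N \<equiv> sum_list ns"
abbreviation "\<sigma> \<equiv> restrict_inv N \<tau>"
abbreviation "X \<equiv> linked_beyond N \<tau>"

lemma tau_outside: "x \<notin> {1..N + n} \<Longrightarrow> \<tau> x = x"
  and tau_inside: "x \<in> {1..N + n} \<Longrightarrow> \<tau> x \<in> {1..N + n}"
  and tau_tau: "\<tau> (\<tau> x) = x"
  using involution_onD[OF nc_involutionD(1)[OF nc]] by auto

lemma tau_not_same_interval:
  "x \<in> {1..N + n} \<Longrightarrow> \<tau> x \<noteq> x \<Longrightarrow> \<not> same_interval (ns @ [n]) x (\<tau> x)"
  using nc_involutionD(2)[OF nc] by simp

lemma tau_0: "\<tau> 0 = 0"
  using tau_outside[of 0] by simp

lemma restrict_inv_eq: "x \<le> N \<Longrightarrow> \<tau> x \<le> N \<Longrightarrow> \<sigma> x = \<tau> x"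
  by (simp add: restrict_inv_def)

lemma restrict_inv_eq_self: "\<not> (x \<le> N \<and> \<tau> x \<le> N) \<Longrightarrow> \<sigma> x = x"
  unfolding restrict_inv_def by (rule if_not_P)

lemma tau_fixes_new_interval:
  assumes "N < x" "x \<le> N + n" "N < \<tau> x"
  shows "\<tau> x = x"
proof (rule ccontr)
  assume "\<tau> x \<noteq> x"
  moreover have "\<tau> x \<in> {1..N + n}"
    using tau_inside[of x] assms by auto
  ultimately show False
    using tau_not_same_interval[of x] same_interval_snoc[of x ns n "\<tau> x"] assms by auto
qed

lemma involution_on_restrict_inv: "involution_on {1..N} \<sigma>"
  unfolding involution_on_def
proof (intro conjI allI ballI impI)
  fix x assume "x \<notin> {1..N}"
  then show "\<sigma> x = x"
    using tau_0 by (cases "x = 0") (auto simp: restrict_inv_def)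
next
  fix x assume x: "x \<in> {1..N}"
  then show "\<sigma> x \<in> {1..N}"
    using tau_inside[of x] by (auto simp: restrict_inv_def)
next
  fix x
  show "\<sigma> (\<sigma> x) = x"
    using tau_tau[of x] by (auto simp: restrict_inv_def)
qed

lemma nc_involution_restrict_inv: "nc_involution ns \<sigma>"
  unfolding nc_involution_def
proof (intro conjI involution_on_restrict_inv ballI impI allI notI)
  fix x assume x: "x \<in> {1..N}" "\<sigma> x \<noteq> x" "same_interval ns x (\<sigma> x)"
  then have "x \<le> N \<and> \<tau> x \<le> N"
    using restrict_inv_eq_self by blast
  moreover have "\<tau> x \<in> {1..N + n}"
    using tau_inside[of x] x by auto
  ultimately show False
    using tau_not_same_interval[of x] same_interval_snoc[of x ns n "\<tau> x"] x restrict_inv_eq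
    by auto
next
  fix i k assume cross: "i < k \<and> k < \<sigma> i \<and> \<sigma> i < \<sigma> k"
  then have "\<sigma> i = \<tau> i" "\<sigma> k = \<tau> k"
    using restrict_inv_eq_self[of i] restrict_inv_eq_self[of k] restrict_inv_eq[of i]
      restrict_inv_eq[of k]
    by fastforce+
  then show False
    using nc_involutionD(3)[OF nc, of i k] cross by auto
next
  fix x y assume arc: "y < x \<and> x < \<sigma> y" and fixed: "\<sigma> x = x"
  then have y: "y \<le> N \<and> \<tau> y \<le> N"
    using restrict_inv_eq_self[of y] by fastforce
  then have "x \<le> N"
    using arc restrict_inv_eq by auto
  show False
  proof (cases "\<tau> x \<le> N")
    case True
    then show False
      using fixed arc y restrict_inv_eq \<open>x \<le> N\<close> nc_involutionD(4)[OF nc, of x y] by auto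
  next
    case False
    then show False
      using nc_involutionD(3)[OF nc, of y x] arc y restrict_inv_eq by auto
  qed
qed

lemma linked_beyond_subset_fixpoints: "X \<subseteq> fixpoints N \<sigma>"
  unfolding linked_beyond_def fixpoints_def using restrict_inv_eq_self by auto

lemma linked_beyond_upward_closed:
  assumes "x \<in> X" "w \<in> fixpoints N \<sigma>" "x < w"
  shows "w \<in> X"
proof (rule ccontr)
  assume "w \<notin> X"
  moreover have w: "w \<in> {1..N}" "\<sigma> w = w"
    using assms(2) by (auto simp: fixpoints_def)
  ultimately have "\<tau> w = w"
    using restrict_inv_eq[of w] by (auto simp: linked_beyond_def)
  moreover have "w < \<tau> x"
    using assms w by (auto simp: linked_beyond_def)
  ultimately show False
    using nc_involutionD(4)[OF nc, of w x] assms(3) by simp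
qed

lemma tau_decreasing_on_linked_beyond:
  assumes "x \<in> X" "x' \<in> X" "x < x'"
  shows "\<tau> x' < \<tau> x"
proof (rule ccontr)
  assume "\<not> \<tau> x' < \<tau> x"
  moreover have "\<tau> x \<noteq> \<tau> x'"
  proof
    assume "\<tau> x = \<tau> x'"
    then have "\<tau> (\<tau> x) = \<tau> (\<tau> x')" by simp
    then show False
      using tau_tau assms(3) by simp
  qed
  moreover have "x' < \<tau> x"
    using assms by (auto simp: linked_beyond_def)
  ultimately show False
    using nc_involutionD(3)[OF nc, of x x'] assms(3) by simp
qed

lemma inj_on_tau: "inj_on \<tau> A"
  by (rule inj_onI) (metis tau_tau)

lemma tau_image_linked_beyond: "\<tau> ` X = {N<..N + card X}"
proof -
  have "\<tau> ` X = {N<..N + card (\<tau> ` X)}"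
  proof (rule down_closed_eq_greaterThanAtMost)
    show "finite (\<tau> ` X)"
      by (simp add: linked_beyond_def)
    show "\<tau> ` X \<subseteq> {N<..}"
      by (auto simp: linked_beyond_def)
  next
    fix y y' assume y: "y \<in> \<tau> ` X" and y': "N < y'" "y' < y"
    then obtain x where x: "x \<in> X" "y = \<tau> x" by auto
    have "y \<le> N + n"
      using tau_inside[of x] x by (auto simp: linked_beyond_def)
    show "y' \<in> \<tau> ` X"
    proof (cases "\<tau> y' \<le> N")
      case True
      have "\<tau> y' \<in> {1..N + n}"
        using tau_inside[of y'] y' \<open>y \<le> N + n\<close> by auto
      then have "\<tau> y' \<in> X"
        using True tau_tau[of y'] y' by (auto simp: linked_beyond_def)
      then show ?thesis
        using tau_tau[of y'] by (metis image_eqI)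
    next
      case False
      then have "\<tau> y' = y'"
        using tau_fixes_new_interval[of y'] y' \<open>y \<le> N + n\<close> by auto
      moreover have "x < y'"
        using x y' by (auto simp: linked_beyond_def)
      ultimately show ?thesis
        using nc_involutionD(4)[OF nc, of y' x] x y' by auto
    qed
  qed
  then show ?thesis
    using card_image[OF inj_on_tau] by simp
qed

lemma card_linked_beyond_le: "card X \<le> n"
proof -
  have "\<tau> ` X \<subseteq> {1..N + n}"
    using tau_inside by (auto simp: linked_beyond_def)
  then have "{N<..N + card X} \<subseteq> {1..N + n}"
    by (simp only: tau_image_linked_beyond)
  then have "N + card X \<le> N + n" if "card X \<noteq> 0"
    using that by (auto simp: subset_iff dest: spec[of _ "N + card X"])
  then show ?thesis
    by (cases "card X = 0") auto
qed

lemma card_linked_beyond_le_fixpoints: "card X \<le> card (fixpoints N \<sigma>)"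
  using linked_beyond_subset_fixpoints by (simp add: card_mono)

lemma top_rank_linked_beyond:
  assumes x: "x \<in> X"
  shows "top_rank (fixpoints N \<sigma>) x = \<tau> x - N - 1"
proof -
  have above_eq: "{w \<in> fixpoints N \<sigma>. x < w} = {w \<in> X. x < w}"
    using linked_beyond_subset_fixpoints linked_beyond_upward_closed[OF x] by auto
  have image_eq: "\<tau> ` {w \<in> X. x < w} = {y \<in> \<tau> ` X. y < \<tau> x}"
  proof
    show "\<tau> ` {w \<in> X. x < w} \<subseteq> {y \<in> \<tau> ` X. y < \<tau> x}"
      using tau_decreasing_on_linked_beyond[OF x] by auto
    show "{y \<in> \<tau> ` X. y < \<tau> x} \<subseteq> \<tau> ` {w \<in> X. x < w}"
    proof
      fix y assume y: "y \<in> {y \<in> \<tau> ` X. y < \<tau> x}"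
      then obtain w where w: "w \<in> X" "y = \<tau> w"
        by blast
      then have "\<tau> w < \<tau> x"
        using y by simp
      then have "x < w"
        using tau_decreasing_on_linked_beyond[OF w(1) x] by (cases x w rule: linorder_cases) auto
      then show "y \<in> \<tau> ` {w \<in> X. x < w}"
        using w by blast
    qed
  qed
  have "\<tau> x \<in> \<tau> ` X"
    using x by (rule imageI)
  then have "\<tau> x \<in> {N<..N + card X}"
    by (simp only: tau_image_linked_beyond)
  then have below_eq: "{y \<in> \<tau> ` X. y < \<tau> x} = {N<..<\<tau> x}"
    by (simp only: tau_image_linked_beyond) auto
  have "top_rank (fixpoints N \<sigma>) x = card {w \<in> X. x < w}"
    by (simp only: top_rank_def above_eq)
  also have "\<dots> = card (\<tau> ` {w \<in> X. x < w})"
    by (rule card_image[symmetric]) (rule inj_on_tau)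
  also have "\<dots> = \<tau> x - N - 1"
    by (simp only: image_eq below_eq card_greaterThanLessThan)
  finally show ?thesis .
qed

lemma linked_beyond_top_rank:
  assumes "x \<in> fixpoints N \<sigma>" "x \<notin> X"
  shows "card X \<le> top_rank (fixpoints N \<sigma>) x"
proof -
  have "x < w" if "w \<in> X" for w
  proof -
    have "w \<noteq> x"
      using that assms(2) by blast
    moreover have "\<not> w < x"
      using linked_beyond_upward_closed[OF that assms(1)] assms(2) by blast
    ultimately show ?thesis by simp
  qed
  then have "X \<subseteq> {w \<in> fixpoints N \<sigma>. x < w}"
    using linked_beyond_subset_fixpoints by auto
  then show ?thesis
    unfolding top_rank_def by (simp add: card_mono)
qed

end

context nc_restriction
begin

lemma restrict_inv_eq_tau:
  assumes "x \<notin> X" "x \<notin> \<tau> ` X"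
  shows "\<sigma> x = \<tau> x"
proof (cases "x \<le> N \<and> \<tau> x \<le> N")
  case True
  then show ?thesis
    by (simp add: restrict_inv_eq)
next
  case False
  then have "\<sigma> x = x"
    by (rule restrict_inv_eq_self)
  have "N < x"
    using False assms(1) tau_0 by (cases "x = 0") (auto simp: linked_beyond_def)
  show ?thesis
  proof (cases "x \<le> N + n")
    case True
    have "\<not> \<tau> x \<le> N"
    proof
      assume "\<tau> x \<le> N"
      then have "\<tau> x \<in> X"
        using tau_inside[of x] tau_tau[of x] True \<open>N < x\<close> by (auto simp: linked_beyond_def)
      then have "x \<in> \<tau> ` X"
        using tau_tau[of x] by (metis imageI)
      then show False
        using assms(2) by blast
    qed
    then show ?thesis
      using tau_fixes_new_interval[of x] True \<open>N < x\<close> \<open>\<sigma> x = x\<close> by simp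
  qed (use tau_outside \<open>\<sigma> x = x\<close> in simp)
qed

lemma extend_inv_restrict_inv: "extend_inv N \<sigma> (card X) = \<tau>"
proof
  fix x
  show "extend_inv N \<sigma> (card X) x = \<tau> x"
  proof (cases x rule: extend_inv_cases[where N = N and \<sigma> = \<sigma> and j = "card X"])
    case top
    then have "x \<in> X"
      using linked_beyond_top_rank[of x] by (metis not_less)
    then show ?thesis
      using top top_rank_linked_beyond[of x] by (simp add: linked_beyond_def)
  next
    case new
    then have "x \<in> \<tau> ` X"
      unfolding tau_image_linked_beyond by simp
    then obtain z where z: "z \<in> X" "x = \<tau> z"
      by (rule imageE)
    then have "top_unrank (fixpoints N \<sigma>) (x - N - 1) = z"
      using top_rank_linked_beyond[OF z(1)] top_unrank_top_rank[OF finite_fixpoints]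
        linked_beyond_subset_fixpoints
      by (metis subsetD)
    then show ?thesis
      using new z tau_tau by simp
  next
    case old
    have "x \<notin> X"
    proof
      assume x: "x \<in> X"
      then have "\<tau> x \<in> {N<..N + card X}"
        using tau_image_linked_beyond by (metis imageI)
      then show False
        using old(1) x top_rank_linked_beyond linked_beyond_subset_fixpoints by force
    qed
    moreover have "x \<notin> \<tau> ` X"
      using old(2) unfolding tau_image_linked_beyond by simp
    ultimately show ?thesis
      using old(3) restrict_inv_eq_tau by simp
  qed
qed

end

lemma inj_on_extend_inv:
  "inj_on (\<lambda>(\<sigma>, j). extend_inv (sum_list ns) \<sigma> j)
     (SIGMA \<sigma>:{\<sigma>. nc_involution ns \<sigma>}. {0..min (card (fixpoints (sum_list ns) \<sigma>)) n})"
proof (rule inj_onI, clarify)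
  fix \<sigma> j \<sigma>' j'
  assume "nc_involution ns \<sigma>" "j \<in> {0..min (card (fixpoints (sum_list ns) \<sigma>)) n}"
    "nc_involution ns \<sigma>'" "j' \<in> {0..min (card (fixpoints (sum_list ns) \<sigma>')) n}"
    and eq: "extend_inv (sum_list ns) \<sigma> j = extend_inv (sum_list ns) \<sigma>' j'"
  then have ext: "nc_extension ns n j \<sigma>" "nc_extension ns n j' \<sigma>'"
    by (simp_all add: nc_extension_def)
  have "\<sigma> = \<sigma>'"
    using nc_extension.restrict_inv_extend_inv[OF ext(1)]
      nc_extension.restrict_inv_extend_inv[OF ext(2)] eq
    by metis
  moreover have "num_arcs (sum_list ns) \<sigma> + j = num_arcs (sum_list ns) \<sigma>' + j'"
    using nc_extension.num_arcs_extend_inv[OF ext(1)]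
      nc_extension.num_arcs_extend_inv[OF ext(2)] eq
    by metis
  ultimately show "\<sigma> = \<sigma>' \<and> j = j'"
    by simp
qed

lemma image_extend_inv:
  "(\<lambda>(\<sigma>, j). extend_inv (sum_list ns) \<sigma> j)
     ` (SIGMA \<sigma>:{\<sigma>. nc_involution ns \<sigma>}. {0..min (card (fixpoints (sum_list ns) \<sigma>)) n})
   = {\<tau>. nc_involution (ns @ [n]) \<tau>}"
proof (intro equalityI subsetI)
  fix \<tau> assume "\<tau> \<in> (\<lambda>(\<sigma>, j). extend_inv (sum_list ns) \<sigma> j)
    ` (SIGMA \<sigma>:{\<sigma>. nc_involution ns \<sigma>}. {0..min (card (fixpoints (sum_list ns) \<sigma>)) n})"
  then obtain \<sigma> j where "nc_extension ns n j \<sigma>" "\<tau> = extend_inv (sum_list ns) \<sigma> j"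
    by (auto simp: nc_extension_def)
  then show "\<tau> \<in> {\<tau>. nc_involution (ns @ [n]) \<tau>}"
    using nc_extension.nc_involution_extend_inv by blast
next
  fix \<tau> assume "\<tau> \<in> {\<tau>. nc_involution (ns @ [n]) \<tau>}"
  then interpret nc_restriction ns n \<tau>
    by unfold_locales simp
  show "\<tau> \<in> (\<lambda>(\<sigma>, j). extend_inv (sum_list ns) \<sigma> j)
    ` (SIGMA \<sigma>:{\<sigma>. nc_involution ns \<sigma>}. {0..min (card (fixpoints (sum_list ns) \<sigma>)) n})"
    using extend_inv_restrict_inv nc_involution_restrict_inv card_linked_beyond_le
      card_linked_beyond_le_fixpoints
    by (intro image_eqI[of _ _ "(\<sigma>, card X)"]) auto
qed

lemma bij_betw_extend_inv:
  "bij_betw (\<lambda>(\<sigma>, j). extend_inv (sum_list ns) \<sigma> j)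
     (SIGMA \<sigma>:{\<sigma>. nc_involution ns \<sigma>}. {0..min (card (fixpoints (sum_list ns) \<sigma>)) n})
     {\<tau>. nc_involution (ns @ [n]) \<tau>}"
  by (rule bij_betw_imageI[OF inj_on_extend_inv image_extend_inv])

section \<open>The two expansions\<close>

definition nc_inv_sum :: "real \<Rightarrow> nat list \<Rightarrow> real poly" where
  "nc_inv_sum t ns = (\<Sum>\<sigma> | nc_involution ns \<sigma>.
     smult (t ^ num_arcs (sum_list ns) \<sigma>) (chebU (card (fixpoints (sum_list ns) \<sigma>)) t))"

lemma NC12_sum_eq_nc_inv_sum:
  "(\<Sum>p\<in>{p \<in> NC12 ns. inner_singles p = 0}. smult (t ^ pairs p) (chebU (singles p) t))
     = nc_inv_sum t ns"
proof -
  let ?f = "\<lambda>p. smult (t ^ pairs p) (chebU (singles p) t)"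
  have "sum ?f {p \<in> NC12 ns. inner_singles p = 0}
      = (\<Sum>\<sigma> | nc_involution ns \<sigma>. ?f (blocks_of \<sigma> {1..sum_list ns}))"
    unfolding NC12_no_inner_singles_eq
    by (rule sum.reindex[OF inj_on_blocks_of_nc_involutions, unfolded comp_def])
  also have "\<dots> = nc_inv_sum t ns"
    unfolding nc_inv_sum_def
  proof (rule sum.cong[OF refl])
    fix \<sigma> assume "\<sigma> \<in> {\<sigma>. nc_involution ns \<sigma>}"
    then have "involution_on {1..sum_list ns} \<sigma>"
      using nc_involutionD(1) by blast
    then show "?f (blocks_of \<sigma> {1..sum_list ns})
        = smult (t ^ num_arcs (sum_list ns) \<sigma>) (chebU (card (fixpoints (sum_list ns) \<sigma>)) t)"
      by (simp add: pairs_blocks_of singles_blocks_of num_arcs_def fixpoints_def)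
  qed
  finally show ?thesis .
qed

lemma nc_inv_sum_Nil: "nc_inv_sum t [] = 1"
proof -
  have "{\<sigma>. nc_involution [] \<sigma>} = {id}"
    by (auto simp: nc_involution_def involution_on_def)
  then show ?thesis
    by (simp add: nc_inv_sum_def fixpoints_def num_arcs_def)
qed

lemma nc_inv_sum_snoc: "nc_inv_sum t (ns @ [n]) = nc_inv_sum t ns * chebU n t"
proof -
  let ?N = "sum_list ns"
  let ?S = "SIGMA \<sigma>:{\<sigma>. nc_involution ns \<sigma>}. {0..min (card (fixpoints ?N \<sigma>)) n}"
  let ?g = "\<lambda>\<tau>. smult (t ^ num_arcs (?N + n) \<tau>) (chebU (card (fixpoints (?N + n) \<tau>)) t)"
  have "nc_inv_sum t (ns @ [n]) = (\<Sum>(\<sigma>, j)\<in>?S. ?g (extend_inv ?N \<sigma> j))"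
    unfolding nc_inv_sum_def sum_list_append
    using sum.reindex_bij_betw[OF bij_betw_extend_inv, of ?g] by (simp add: case_prod_beta')
  also have "\<dots> = (\<Sum>\<sigma> | nc_involution ns \<sigma>. \<Sum>j = 0..min (card (fixpoints ?N \<sigma>)) n.
      ?g (extend_inv ?N \<sigma> j))"
    by (rule sum.Sigma[symmetric]) (auto simp: finite_nc_involutions)
  also have "\<dots> = (\<Sum>\<sigma> | nc_involution ns \<sigma>.
      smult (t ^ num_arcs ?N \<sigma>) (chebU (card (fixpoints ?N \<sigma>)) t * chebU n t))"
  proof (intro sum.cong refl)
    fix \<sigma> assume "\<sigma> \<in> {\<sigma>. nc_involution ns \<sigma>}"
    then have ext: "nc_extension ns n j \<sigma>" if "j \<in> {0..min (card (fixpoints ?N \<sigma>)) n}" for j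
      using that by (simp add: nc_extension_def)
    have "(\<Sum>j = 0..min (card (fixpoints ?N \<sigma>)) n. ?g (extend_inv ?N \<sigma> j))
        = (\<Sum>j = 0..min (card (fixpoints ?N \<sigma>)) n. smult (t ^ num_arcs ?N \<sigma>)
            (smult (t ^ j) (chebU (card (fixpoints ?N \<sigma>) + n - 2 * j) t)))"
      using nc_extension.num_arcs_extend_inv[OF ext] nc_extension.card_fixpoints_extend_inv[OF ext]
      by (intro sum.cong refl) (simp add: power_add)
    also have "\<dots> = smult (t ^ num_arcs ?N \<sigma>) (chebU (card (fixpoints ?N \<sigma>)) t * chebU n t)"
      by (simp add: chebU_mult smult_sum_right)
    finally show "(\<Sum>j = 0..min (card (fixpoints ?N \<sigma>)) n. ?g (extend_inv ?N \<sigma> j))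
        = smult (t ^ num_arcs ?N \<sigma>) (chebU (card (fixpoints ?N \<sigma>)) t * chebU n t)" .
  qed
  also have "\<dots> = nc_inv_sum t ns * chebU n t"
    by (simp add: nc_inv_sum_def sum_distrib_right)
  finally show ?thesis .
qed

lemma prod_chebU_eq_nc_inv_sum: "(\<Prod>j\<leftarrow>ns. chebU j t) = nc_inv_sum t ns"
  by (induction ns rule: rev_induct) (simp_all add: nc_inv_sum_Nil nc_inv_sum_snoc)

lemma card_NC2_snoc:
  "card (NC2 (ns @ [m])) = card {\<sigma>. nc_involution ns \<sigma> \<and> card (fixpoints (sum_list ns) \<sigma>) = m}"
proof -
  let ?N = "sum_list ns"
  let ?S = "SIGMA \<sigma>:{\<sigma>. nc_involution ns \<sigma>}. {0..min (card (fixpoints ?N \<sigma>)) m}"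
  let ?D = "{\<sigma>. nc_involution ns \<sigma> \<and> card (fixpoints ?N \<sigma>) = m}"
  have "card (NC2 (ns @ [m]))
      = card {\<tau> \<in> {\<tau>. nc_involution (ns @ [m]) \<tau>}. fixpoints (sum_list (ns @ [m])) \<tau> = {}}"
    unfolding NC2_eq
    by (subst card_image[OF inj_on_subset[OF inj_on_blocks_of_nc_involutions]]) auto
  also have "\<dots> = card {x \<in> ?S. case x of (\<sigma>, j) \<Rightarrow> card (fixpoints ?N \<sigma>) + m - 2 * j = 0}"
  proof (rule bij_betw_same_card[symmetric], rule bij_betw_Collect[OF bij_betw_extend_inv])
    fix x assume "x \<in> ?S"
    then obtain \<sigma> j where x: "x = (\<sigma>, j)" and ext: "nc_extension ns m j \<sigma>"
      by (auto simp: nc_extension_def)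
    from ext have "card (fixpoints (?N + m) (extend_inv ?N \<sigma> j)) = card (fixpoints ?N \<sigma>) + m - 2 * j"
      by (rule nc_extension.card_fixpoints_extend_inv)
    then show "(fixpoints (sum_list (ns @ [m])) ((\<lambda>(\<sigma>, j). extend_inv ?N \<sigma> j) x) = {})
        \<longleftrightarrow> (case x of (\<sigma>, j) \<Rightarrow> card (fixpoints ?N \<sigma>) + m - 2 * j = 0)"
      using card_eq_0_iff[of "fixpoints (?N + m) (extend_inv ?N \<sigma> j)"] x by simp
  qed
  also have "{x \<in> ?S. case x of (\<sigma>, j) \<Rightarrow> card (fixpoints ?N \<sigma>) + m - 2 * j = 0} = (\<lambda>\<sigma>. (\<sigma>, m)) ` ?D"
    by auto
  also have "card \<dots> = card ?D"
    by (rule card_image) (simp add: inj_on_def)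
  finally show ?thesis .
qed

lemma nc_inv_sum_eq_NC2_sum:
  assumes "t > 0"
  shows "nc_inv_sum t ns = (\<Sum>m = 0..sum_list ns.
      smult (t powr ((real (sum_list ns) - real m) / 2) * real (card (NC2 (ns @ [m])))) (chebU m t))"
proof -
  let ?N = "sum_list ns"
  let ?h = "\<lambda>\<sigma>. smult (t ^ num_arcs ?N \<sigma>) (chebU (card (fixpoints ?N \<sigma>)) t)"
  have "nc_inv_sum t ns = sum ?h {\<sigma>. nc_involution ns \<sigma>}"
    by (simp add: nc_inv_sum_def)
  also have "\<dots> = (\<Sum>m = 0..?N. sum ?h {\<sigma> \<in> {\<sigma>. nc_involution ns \<sigma>}. card (fixpoints ?N \<sigma>) = m})"
  proof (rule sum.group[symmetric])
    show "(\<lambda>\<sigma>. card (fixpoints ?N \<sigma>)) ` {\<sigma>. nc_involution ns \<sigma>} \<subseteq> {0..?N}"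
      using card_fixpoints_le by (auto simp: atLeast0AtMost)
  qed (simp_all add: finite_nc_involutions)
  also have "\<dots> = (\<Sum>m = 0..?N.
      smult (t powr ((real ?N - real m) / 2) * real (card (NC2 (ns @ [m])))) (chebU m t))"
  proof (intro sum.cong refl)
    fix m
    let ?D = "{\<sigma> \<in> {\<sigma>. nc_involution ns \<sigma>}. card (fixpoints ?N \<sigma>) = m}"
    have "?h \<sigma> = smult (t powr ((real ?N - real m) / 2)) (chebU m t)" if "\<sigma> \<in> ?D" for \<sigma>
    proof -
      have "2 * num_arcs ?N \<sigma> + m = ?N"
        using double_num_arcs_add_card_fixpoints[of ns \<sigma>] that by simp
      then have "2 * real (num_arcs ?N \<sigma>) + real m = real ?N"
        by (subst (asm) eq_commute) (simp only: of_nat_add of_nat_mult of_nat_numeral)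
      then have "real (num_arcs ?N \<sigma>) = (real ?N - real m) / 2"
        by (simp add: field_simps)
      then show ?thesis
        using that powr_realpow[OF assms] by (metis (mono_tags, lifting) mem_Collect_eq)
    qed
    then have "sum ?h ?D = of_nat (card ?D) * smult (t powr ((real ?N - real m) / 2)) (chebU m t)"
      by simp
    then show "sum ?h ?D
        = smult (t powr ((real ?N - real m) / 2) * real (card (NC2 (ns @ [m])))) (chebU m t)"
      by (simp add: card_NC2_snoc of_nat_poly mult.commute)
  qed
  finally show ?thesis .
qed

theorem mainTheorem9:
  fixes t :: real and ns :: "nat list"
  assumes "t > 0"
  shows "(\<Prod>j\<leftarrow>ns. chebU j t)
           = (\<Sum>p\<in>{p \<in> NC12 ns. inner_singles p = 0}. smult (t ^ pairs p) (chebU (singles p) t))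
       \<and> (\<Prod>j\<leftarrow>ns. chebU j t)
           = (\<Sum>m = 0..sum_list ns.
                smult (t powr ((real (sum_list ns) - real m) / 2) * real (card (NC2 (ns @ [m]))))
                      (chebU m t))"
  using prod_chebU_eq_nc_inv_sum NC12_sum_eq_nc_inv_sum nc_inv_sum_eq_NC2_sum[OF assms] by simp

end
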